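(* Let $p,q\ge1$, $J\subseteq[p-1]$, $K\subseteq[q-1]$ and $R\subseteq[p+q-1]$. For $\zeta\in\mathfrak{S}^{(p,q)}$ define $r_\zeta\colon\mathcal{Q}_p\times\mathcal{Q}_q\to\mathcal{Q}_{p+q}$ by $r_\zeta(J',K')=\mathrm{Des}\big((\zeta_{J'}\times\zeta_{K'})\cdot\zeta^{-1}\big)$. Then the coefficient of $M_{R,p+q}$ in the product $M_{J,p}\cdot M_{K,q}$ equals the number of $\zeta\in\mathfrak{S}^{(p,q)}$ such that the set $\{(J',K')\in\mathcal{Q}_p\times\mathcal{Q}_q: r_\zeta(J',K')\subseteq R\}$ has a greatest element with respect to componentwise inclusion and this greatest element is $(J,K)$.
   Context: $\mathcal{Q}_n$ denotes the set of subsets of $[n-1]$ ordered by inclusion. Permutations in one-line notation, product is composition. $\mathrm{Des}(x)=\{i:x_i>x_{i+1}\}$. For $x\in\mathfrak{S}_p,y\in\mathfrak{S}_q$, $x\times y\in\mathfrak{S}_{p+q}$ has $(x\times y)(i)=x_i$ ($i\le p$), $(x\times y)(p+j)=p+y_j$. $\mathfrak{S}^{(p,q)}=\{\zeta\in\mathfrak{S}_{p+q}:\zeta_1<\cdots<\zeta_p,\zeta_{p+1}<\cdots<\zeta_{p+q}\}$. For $J=\{p_1<\cdots<p_k\}\subseteq[n-1]$, $\zeta_J=(n{-}p_1{+}1,\ldots,n,\ n{-}p_2{+}1,\ldots,n{-}p_1,\ldots,1,\ldots,n{-}p_k)\in\mathfrak{S}_n$, $\zeta_\emptyset=1_n$.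 For $J=\{j_1<\cdots<j_{k-1}\}\subseteq[n-1]$ with composition $\alpha=(j_1,j_2-j_1,\ldots,n-j_{k-1})$, $M_{J,n}=\sum_{i_1<\cdots<i_k}x_{i_1}^{\alpha_1}\cdots x_{i_k}^{\alpha_k}$ is the monomial quasi-symmetric function (commuting variables $x_1,x_2,\ldots$); products are products of formal power series. *)

theory Defs
  imports "HOL-Combinatorics.Permutations"
begin

text \<open>Permutations of [n] are functions nat \<Rightarrow> nat with \<open>\<sigma> permutes {1..n}\<close>
  (identity outside {1..n}); one-line notation x_i = x i; product is composition.\<close>

definition Des :: "nat \<Rightarrow> (nat \<Rightarrow> nat) \<Rightarrow> nat set" where
  "Des n x = {i \<in> {1..<n}. x i > x (Suc i)}"

definition cross :: "nat \<Rightarrow> (nat \<Rightarrow> nat) \<Rightarrow> (nat \<Rightarrow> nat) \<Rightarrow> nat \<Rightarrow> nat" where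
  "cross p x y = (\<lambda>i. if i \<le> p then x i else p + y (i - p))"

definition shuffles :: "nat \<Rightarrow> nat \<Rightarrow> (nat \<Rightarrow> nat) set" where
  "shuffles p q = {\<zeta>. \<zeta> permutes {1..p+q}
      \<and> (\<forall>i j. 1 \<le> i \<and> i < j \<and> j \<le> p \<longrightarrow> \<zeta> i < \<zeta> j)
      \<and> (\<forall>i j. p < i \<and> i < j \<and> j \<le> p + q \<longrightarrow> \<zeta> i < \<zeta> j)}"

text \<open>zeta_J in S_n: position i in the block (p_{t-1}, p_t] gets value n - p_t + (i - p_{t-1}),
  with p_0 = 0 and p_{k+1} = n.\<close>
definition zetaJ :: "nat \<Rightarrow> nat set \<Rightarrow> nat \<Rightarrow> nat" where
  "zetaJ n J = (\<lambda>i. if 1 \<le> i \<and> i \<le> n then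
       (let a = Max (insert 0 {j \<in> J. j < i}); b = Min (insert n {j \<in> J. i \<le> j})
        in n - b + (i - a))
     else i)"

definition r_map :: "nat \<Rightarrow> nat \<Rightarrow> (nat \<Rightarrow> nat) \<Rightarrow> nat set \<Rightarrow> nat set \<Rightarrow> nat set" where
  "r_map p q \<zeta> J' K' = Des (p + q) (cross p (zetaJ p J') (zetaJ q K') \<circ> inv \<zeta>)"

definition compo :: "nat \<Rightarrow> nat set \<Rightarrow> nat list" where
  "compo n J = (let L = 0 # sorted_list_of_set J @ [n] in map (\<lambda>(a, b). b - a) (zip L (tl L)))"

text \<open>Formal power series in commuting variables x_0, x_1, ... (a relabelling of x_1, x_2, ...):
  functions from exponent vectors (finitely supported nat \<Rightarrow> nat) to coefficients.\<close>
type_synonym fps_inf = "(nat \<Rightarrow> nat) \<Rightarrow> int"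

definition series_mult :: "fps_inf \<Rightarrow> fps_inf \<Rightarrow> fps_inf" where
  "series_mult f g e = (\<Sum>a \<in> {a. \<forall>i. a i \<le> e i}. f a * g (\<lambda>i. e i - a i))"

definition M :: "nat set \<Rightarrow> nat \<Rightarrow> fps_inf" where
  "M J n e = (if map e (sorted_list_of_set {i. e i \<noteq> 0}) = compo n J then 1 else 0)"

definition greatest_is :: "nat \<Rightarrow> nat \<Rightarrow> (nat \<Rightarrow> nat) \<Rightarrow> nat set \<Rightarrow> nat set \<Rightarrow> nat set \<Rightarrow> bool" where
  "greatest_is p q \<zeta> R J K =
     (let S = {(J', K'). J' \<subseteq> {1..<p} \<and> K' \<subseteq> {1..<q} \<and> r_map p q \<zeta> J' K' \<subseteq> R}
      in (J, K) \<in> S \<and> (\<forall>(J', K') \<in> S. J' \<subseteq> J \<and> K' \<subseteq> K))"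

end

theory Submission
  imports Defs
begin

(* Let n = p + q and, for an exponent vector e, let breaks e be the set of partial sums of the
   composition formed by the nonzero entries of e; thus M_{J,n} has coefficient 1 at x^e exactly
   when breaks e = J \<union> {n}. The coefficient of x^e in M_{J,p} M_{K,q} counts the splittings
   e = a + b with breaks a = J \<union> {p} and breaks b = K \<union> {q}, and both sides vanish unless
   breaks e = R \<union> {n} for some R \<subseteq> [n-1].

   Cut [n] into consecutive blocks of lengths e_0, e_1, ... . A splitting is encoded by the set S
   formed by the first a_i elements of each block i. Listing S and [n] - S increasingly and cutting
   them at gaps and after elements of R yields breaks a and breaks b, and the sets S that occur are
   exactly those for which every m \<notin> S with m + 1 \<in> S lies in R.

   A shuffle \<zeta> is determined by S = \<zeta>[p]. Since \<zeta> increases on [p] and on [p+1, n], the descents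
   of (\<zeta>_J' \<times> \<zeta>_K') \<zeta>^-1 are the m \<notin> S with m + 1 \<in> S together with the values \<zeta> j, for j \<in> J'
   or j - p \<in> K', that are followed by \<zeta> (j + 1) = \<zeta> j + 1. So a greatest pair below R exists iff
   every m \<notin> S with m + 1 \<in> S lies in R, and it is then read off from S and [n] - S by the same
   rule that gives breaks a and breaks b: both sides count the same sets S. *)

section \<open>Compositions and monomial quasi-symmetric functions\<close>

definition psum :: "(nat \<Rightarrow> nat) \<Rightarrow> nat \<Rightarrow> nat" where
  "psum e i = (\<Sum>j<i. e j)"

lemma psum_0 [simp]: "psum e 0 = 0"
  by (simp add: psum_def)

lemma psum_Suc [simp]: "psum e (Suc i) = psum e i + e i"
  by (simp add: psum_def)

lemma psum_mono: "i \<le> j \<Longrightarrow> psum e i \<le> psum e j"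
  by (induction j) (auto simp: le_Suc_eq)

lemma psum_diff:
  assumes "\<forall>i. a i \<le> e i"
  shows "psum e k = psum a k + psum (\<lambda>i. e i - a i) k"
proof (induction k)
  case (Suc k)
  then show ?case
    using assms[rule_format, of k] by simp
qed simp

lemma support_bound:
  fixes e :: "nat \<Rightarrow> 'a::zero"
  assumes "finite {i. e i \<noteq> 0}"
  obtains N where "\<forall>i\<ge>N. e i = 0"
  using assms finite_nat_set_iff_bounded by (meson leD mem_Collect_eq)

definition breaks :: "(nat \<Rightarrow> nat) \<Rightarrow> nat set" where
  "breaks e = {psum e (Suc i) | i. e i \<noteq> 0}"

lemma breaks_pos: "x \<in> breaks e \<Longrightarrow> 0 < x"
  unfolding breaks_def by auto

lemma psum_in_breaks: "0 < psum e N \<Longrightarrow> psum e N \<in> breaks e"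
proof (induction N)
  case (Suc N)
  show ?case
  proof (cases "e N = 0")
    case True
    then show ?thesis
      using Suc by simp
  next
    case False
    then show ?thesis
      unfolding breaks_def by blast
  qed
qed simp

lemma breaks_bounded:
  assumes "\<forall>i\<ge>N. e i = 0" and "x \<in> breaks e"
  shows "1 \<le> x \<and> x \<le> psum e N"
proof -
  obtain i where i: "x = psum e (Suc i)" "e i \<noteq> 0"
    using assms(2) unfolding breaks_def by auto
  then have "Suc i \<le> N"
    using assms(1) by (metis not_less_eq_eq)
  then show ?thesis
    using i psum_mono[of "Suc i" N e] by simp
qed

lemma psum_eq_max_break:
  assumes "\<forall>i\<ge>N. e i = 0" and "breaks e = insert c X" and "X \<subseteq> {1..<c}"
  shows "psum e N = c"
proof -
  have "c \<in> breaks e"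
    using assms(2) by simp
  then have "1 \<le> c" and "c \<le> psum e N"
    using breaks_bounded[OF assms(1)] by auto
  then have "psum e N \<in> insert c X"
    using psum_in_breaks[of e N] assms(2) by simp
  then show ?thesis
    using \<open>c \<le> psum e N\<close> assms(3) by fastforce
qed

lemma breaks_of_splitting:
  assumes "finite {i. e i \<noteq> 0}" and a: "\<forall>i. a i \<le> e i"
    and "breaks a = insert p J" and "J \<subseteq> {1..<p}"
    and "breaks (\<lambda>i. e i - a i) = insert q K" and "K \<subseteq> {1..<q}"
  shows "p + q \<in> breaks e \<and> breaks e \<subseteq> {1..p+q}"
proof -
  obtain N where N: "\<forall>i\<ge>N. e i = 0"
    using support_bound[OF assms(1)] by blast
  then have "\<forall>i\<ge>N. a i = 0"
    using a by (metis le_0_eq)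
  then have "psum a N = p"
    using psum_eq_max_break assms(3,4) by blast
  moreover have "psum (\<lambda>i. e i - a i) N = q"
    using N psum_eq_max_break[of N "\<lambda>i. e i - a i"] assms(5,6) by simp
  ultimately have "psum e N = p + q"
    using psum_diff[OF a] by simp
  moreover have "0 < p"
    using breaks_pos[of p a] assms(3) by simp
  ultimately show ?thesis
    using psum_in_breaks[of e N] breaks_bounded[OF N] by auto
qed

fun running_sums :: "nat \<Rightarrow> nat list \<Rightarrow> nat list" where
  "running_sums s [] = []"
| "running_sums s (v # vs) = (s + v) # running_sums (s + v) vs"

fun differences :: "nat \<Rightarrow> nat list \<Rightarrow> nat list" where
  "differences s [] = []"
| "differences s (y # ys) = (y - s) # differences y ys"

lemma compo_eq_differences: "compo n J = differences 0 (sorted_list_of_set J @ [n])"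
proof -
  have "map (\<lambda>(a, b). b - a) (zip (s # ys) ys) = differences s ys" for s ys
    by (induction ys arbitrary: s) auto
  from this[of 0 "sorted_list_of_set J @ [n]"] show ?thesis
    unfolding compo_def Let_def by simp
qed

lemma differences_eq_iff:
  assumes "sorted (s # ys)"
  shows "vs = differences s ys \<longleftrightarrow> running_sums s vs = ys"
proof -
  have inv1: "differences s (running_sums s vs) = vs" for s vs
    by (induction vs arbitrary: s) auto
  have inv2: "running_sums s (differences s ys) = ys" if "sorted (s # ys)" for s ys
    using that by (induction ys arbitrary: s) auto
  show ?thesis
    using inv1[of s vs] inv2[OF assms] by auto
qed

lemma running_sums_support:
  assumes "sorted_wrt (<) xs" and "\<forall>i. e i \<noteq> 0 \<longleftrightarrow> i \<in> set xs"
  shows "running_sums s (map e xs) = map (\<lambda>i. s + psum e (Suc i)) xs"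
  using assms
proof (induction xs arbitrary: e s)
  case (Cons x xs)
  define e' where "e' = e(x := 0)"
  have xs: "\<forall>y\<in>set xs. x < y" "sorted_wrt (<) xs"
    using Cons.prems(1) by auto
  have "\<forall>i. e' i \<noteq> 0 \<longleftrightarrow> i \<in> set xs"
    using Cons.prems(2) xs(1) unfolding e'_def by auto
  note IH = Cons.IH[OF xs(2) this, of "s + e x"]
  have "\<forall>j<x. e j = 0"
    using Cons.prems(2) xs(1) by fastforce
  then have "psum e x = 0"
    by (simp add: psum_def)
  have split: "psum e k = psum e' k + (if x < k then e x else 0)" for k
    unfolding e'_def by (induction k) (auto simp: less_Suc_eq)
  have shift: "psum e (Suc i) = e x + psum e' (Suc i)" if "i \<in> set xs" for i
    using bspec[OF xs(1) that] split[of "Suc i"] by (simp del: psum_Suc)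
  have "map e xs = map e' xs"
    unfolding e'_def using xs(1) by auto
  then have "running_sums s (map e (x # xs)) = (s + e x) # running_sums (s + e x) (map e' xs)"
    by (simp only: list.map running_sums.simps)
  also have "\<dots> = (s + e x) # map (\<lambda>i. s + e x + psum e' (Suc i)) xs"
    using IH by (simp del: psum_Suc)
  also have "\<dots> = map (\<lambda>i. s + psum e (Suc i)) (x # xs)"
    using shift \<open>psum e x = 0\<close> psum_Suc[of e x] by (simp del: psum_Suc add: add.assoc)
  finally show ?case .
qed simp

lemma M_breaks:
  assumes "finite {i. e i \<noteq> 0}" and "J \<subseteq> {1..<n}"
  shows "M J n e = (if breaks e = insert n J then 1 else 0)"
proof -
  define xs where "xs = sorted_list_of_set {i. e i \<noteq> 0}"
  define ps where "ps = sorted_list_of_set J @ [n]"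
  define bs where "bs = map (\<lambda>i. psum e (Suc i)) xs"
  have "finite J"
    using assms(2) finite_subset by blast
  have xs: "sorted_wrt (<) xs" "\<forall>i. e i \<noteq> 0 \<longleftrightarrow> i \<in> set xs"
    unfolding xs_def using assms(1) by simp_all
  have ps: "sorted_wrt (<) ps" "sorted (0 # ps)" "set ps = insert n J"
    unfolding ps_def using \<open>finite J\<close> assms(2)
    by (auto simp: sorted_wrt_append strict_sorted_iff)
  have "sorted_wrt (\<lambda>i j. psum e (Suc i) < psum e (Suc j)) xs"
  proof (rule sorted_wrt_mono_rel[OF _ xs(1)])
    fix i j
    assume "i \<in> set xs" "j \<in> set xs" "i < j"
    then have "psum e (Suc i) \<le> psum e j" "e j \<noteq> 0"
      using xs(2) psum_mono[of "Suc i" j e] by auto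
    then show "psum e (Suc i) < psum e (Suc j)"
      by simp
  qed
  then have bs: "sorted_wrt (<) bs" "set bs = breaks e"
    unfolding bs_def breaks_def using xs(2) by (auto simp: sorted_wrt_map)
  have "map e xs = compo n J \<longleftrightarrow> bs = ps"
    unfolding compo_eq_differences ps_def[symmetric] differences_eq_iff[OF ps(2)]
      running_sums_support[OF xs] bs_def by simp
  also have "\<dots> \<longleftrightarrow> set bs = set ps"
    using sorted_distinct_set_unique[of bs ps] bs(1) ps(1) by (auto simp: strict_sorted_iff)
  finally show ?thesis
    unfolding M_def xs_def[symmetric] bs(2) ps(3) by simp
qed

lemma sum_M_eq:
  assumes "finite {i. e i \<noteq> 0}"
  shows "(\<Sum>R \<in> Pow {1..<n}. c R * M R n e)
    = (if n \<in> breaks e \<and> breaks e \<subseteq> {1..n} then c (breaks e - {n}) else 0)"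
proof -
  have "breaks e = insert n R \<longleftrightarrow> n \<in> breaks e \<and> breaks e \<subseteq> {1..n} \<and> R = breaks e - {n}"
    if "R \<in> Pow {1..<n}" for R
  proof
    assume breaks_e: "breaks e = insert n R"
    then have "0 < n"
      using breaks_pos[of n e] by simp
    then show "n \<in> breaks e \<and> breaks e \<subseteq> {1..n} \<and> R = breaks e - {n}"
      using that breaks_e by auto
  qed auto
  then have "(\<Sum>R \<in> Pow {1..<n}. c R * M R n e)
      = (\<Sum>R \<in> Pow {1..<n}. if n \<in> breaks e \<and> breaks e \<subseteq> {1..n} \<and> R = breaks e - {n} then c R else 0)"
    using M_breaks[OF assms] by (intro sum.cong) auto
  also have "\<dots> = (if n \<in> breaks e \<and> breaks e \<subseteq> {1..n} then c (breaks e - {n}) else 0)"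
  proof (cases "n \<in> breaks e \<and> breaks e \<subseteq> {1..n}")
    case True
    then have "breaks e - {n} \<in> Pow {1..<n}"
      by auto
    then show ?thesis
      using True by (simp add: sum.delta')
  next
    case False
    then show ?thesis
      by (subst sum.neutral) auto
  qed
  finally show ?thesis .
qed

lemma finite_pointwise_le:
  fixes e :: "nat \<Rightarrow> nat"
  assumes "finite {i. e i \<noteq> 0}"
  shows "finite {a. \<forall>i. a i \<le> e i}"
proof -
  obtain B where B: "\<forall>i\<ge>B. e i = 0"
    using support_bound[OF assms] by blast
  define V where "V = Max (e ` {..<B})"
  have "a i \<in> {..V}" if "\<forall>i. a i \<le> e i" "i \<in> {..<B}" for a i
  proof -
    have "e i \<le> V"
      unfolding V_def using that(2) by (intro Max_ge) auto
    then show ?thesis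
      using that(1)[rule_format, of i] by simp
  qed
  moreover have "a i = 0" if "\<forall>i. a i \<le> e i" "i \<notin> {..<B}" for a i
    using that(1)[rule_format, of i] that(2) B by simp
  ultimately have "{a. \<forall>i. a i \<le> e i} \<subseteq> {a. \<forall>i. (i \<in> {..<B} \<longrightarrow> a i \<in> {..V}) \<and> (i \<notin> {..<B} \<longrightarrow> a i = 0)}"
    by blast
  then show ?thesis
    by (rule finite_subset) (rule finite_set_of_finite_funs; simp)
qed

lemma series_mult_M:
  assumes "finite {i. e i \<noteq> 0}" and "J \<subseteq> {1..<p}" and "K \<subseteq> {1..<q}"
  shows "series_mult (M J p) (M K q) e =
    int (card {a. (\<forall>i. a i \<le> e i) \<and> breaks a = insert p J \<and> breaks (\<lambda>i. e i - a i) = insert q K})"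
proof -
  let ?A = "{a. \<forall>i. a i \<le> e i}"
  let ?P = "\<lambda>a. breaks a = insert p J \<and> breaks (\<lambda>i. e i - a i) = insert q K"
  have "M J p a * M K q (\<lambda>i. e i - a i) = (if ?P a then 1 else 0)" if "a \<in> ?A" for a
  proof -
    have "a i \<le> e i" for i
      using that by simp
    then have "{i. a i \<noteq> 0} \<subseteq> {i. e i \<noteq> 0}"
      by (intro Collect_mono) (metis le_0_eq)
    moreover have "{i. e i - a i \<noteq> 0} \<subseteq> {i. e i \<noteq> 0}"
      by (intro Collect_mono) simp
    ultimately have "finite {i. a i \<noteq> 0}" "finite {i. e i - a i \<noteq> 0}"
      using assms(1) finite_subset by blast+
    then show ?thesis
      using M_breaks[OF _ assms(2), of a] M_breaks[OF _ assms(3), of "\<lambda>i. e i - a i"] by simp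
  qed
  then have "series_mult (M J p) (M K q) e = (\<Sum>a\<in>?A. if ?P a then 1 else 0)"
    unfolding series_mult_def by (rule sum.cong[OF refl])
  also have "\<dots> = int (card {a \<in> ?A. ?P a})"
    using finite_pointwise_le[OF assms(1)] by (simp add: sum.If_cases Int_def)
  finally show ?thesis
    by (simp add: Collect_conj_eq)
qed

section \<open>Induced break sets\<close>

(* Listing X as x_1 < ... < x_c, this is {k. x_k \<in> R \<or> x_k + 1 \<notin> X}: the break set of the
   composition of c obtained by cutting X into runs of consecutive integers and after elements of R. *)
definition induced_breaks :: "nat set \<Rightarrow> nat set \<Rightarrow> nat set" where
  "induced_breaks R X = {card (X \<inter> {..m}) | m. m \<in> X \<and> (m \<in> R \<or> Suc m \<notin> X)}"

lemma induced_breaks_empty [simp]: "induced_breaks R {} = {}"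
  unfolding induced_breaks_def by simp

lemma card_in_induced_breaks:
  assumes "finite X" and "X \<noteq> {}"
  shows "card X \<in> induced_breaks R X"
proof -
  have "Max X \<in> X"
    using assms by simp
  moreover have "X \<inter> {..Max X} = X"
    using Max_ge[OF assms(1)] by auto
  moreover have "Suc (Max X) \<notin> X"
    using Max_ge[OF assms(1)] Suc_n_not_le_n by blast
  ultimately show ?thesis
    unfolding induced_breaks_def by (intro CollectI exI[of _ "Max X"]) simp
qed

lemma induced_breaks_le_card: "finite X \<Longrightarrow> k \<in> induced_breaks R X \<Longrightarrow> k \<le> card X"
  unfolding induced_breaks_def by (auto intro: card_mono)

lemma card_eq_if_induced_breaks_eq:
  assumes "finite X" and "induced_breaks R X = insert c C" and "C \<subseteq> {..<c}"
  shows "card X = c"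
proof -
  have "X \<noteq> {}"
    using assms(2) by auto
  then have "card X \<in> insert c C" "c \<le> card X"
    using card_in_induced_breaks[OF assms(1)] induced_breaks_le_card[OF assms(1)] assms(2) by auto
  then show ?thesis
    using assms(3) by auto
qed

lemma strict_mono_on_Suc_value:
  fixes f :: "nat \<Rightarrow> nat"
  assumes mono: "strict_mono_on {a<..b} f" and i: "i \<in> {a<..b}" and i': "i' \<in> {a<..b}"
    and "f i' = Suc (f i)"
  shows "i' = Suc i"
proof (rule ccontr)
  have "i < i'"
    using strict_mono_on_less[OF mono i i'] assms(4) by simp
  moreover assume "i' \<noteq> Suc i"
  ultimately have "Suc i < i'"
    by simp
  then have "Suc i \<in> {a<..b}"
    using i i' by auto
  then have "f i < f (Suc i)" "f (Suc i) < f i'"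
    using strict_mono_on_less[OF mono] i i' \<open>Suc i < i'\<close> by auto
  then show False
    using assms(4) by simp
qed

lemma card_image_Int_atMost:
  fixes f :: "nat \<Rightarrow> nat"
  assumes mono: "strict_mono_on {a<..b} f" and j: "j \<in> {a<..b}"
  shows "card (f ` {a<..b} \<inter> {..f j}) = j - a"
proof -
  have "f ` {a<..b} \<inter> {..f j} = f ` {a<..j}"
    using j strict_mono_on_less_eq[OF mono _ j] by auto
  moreover have "inj_on f {a<..j}"
    by (rule inj_on_subset[OF strict_mono_on_imp_inj_on[OF mono]]) (use j in auto)
  ultimately show ?thesis
    by (simp add: card_image)
qed

lemma card_Int_atMost_inj:
  fixes X :: "nat set"
  assumes "finite X" and "x \<in> X" and "y \<in> X" and "card (X \<inter> {..x}) = card (X \<inter> {..y})"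
  shows "x = y"
proof (rule ccontr)
  have mono: "card (X \<inter> {..u}) < card (X \<inter> {..v})" if "u < v" "v \<in> X" for u v
  proof -
    have "X \<inter> {..u} \<subseteq> X \<inter> {..v}" "v \<in> X \<inter> {..v} - X \<inter> {..u}"
      using that by auto
    then have "X \<inter> {..u} \<subset> X \<inter> {..v}"
      by blast
    then show ?thesis
      using assms(1) by (simp add: psubset_card_mono)
  qed
  assume "x \<noteq> y"
  then show False
    using mono[of x y] mono[of y x] assms(2-4) by (cases "x < y") auto
qed

lemma strict_mono_on_eq_if_image_eq:
  fixes f g :: "nat \<Rightarrow> nat"
  assumes "strict_mono_on {a<..b} f" and "strict_mono_on {a<..b} g"
    and "f ` {a<..b} = g ` {a<..b}" and "j \<in> {a<..b}"
  shows "f j = g j"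
proof (rule card_Int_atMost_inj)
  show "card (f ` {a<..b} \<inter> {..f j}) = card (f ` {a<..b} \<inter> {..g j})"
    using card_image_Int_atMost[OF assms(1,4)] card_image_Int_atMost[OF assms(2,4)] assms(3) by simp
qed (use assms(3,4) in auto)

lemma Suc_in_strict_mono_image_iff:
  fixes f :: "nat \<Rightarrow> nat"
  assumes mono: "strict_mono_on {a<..b} f" and j: "j \<in> {a<..b}"
  shows "Suc (f j) \<in> f ` {a<..b} \<longleftrightarrow> j < b \<and> f (Suc j) = Suc (f j)"
proof
  assume "Suc (f j) \<in> f ` {a<..b}"
  then obtain i where "i \<in> {a<..b}" "f i = Suc (f j)"
    by auto
  moreover from this have "i = Suc j"
    using strict_mono_on_Suc_value[OF mono j] by blast
  ultimately show "j < b \<and> f (Suc j) = Suc (f j)"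
    by auto
next
  assume "j < b \<and> f (Suc j) = Suc (f j)"
  then show "Suc (f j) \<in> f ` {a<..b}"
    using j by (intro rev_image_eqI[of "Suc j"]) auto
qed

lemma induced_breaks_strict_mono_image:
  fixes f :: "nat \<Rightarrow> nat"
  assumes mono: "strict_mono_on {a<..a+c} f" and "1 \<le> c"
  shows "induced_breaks R (f ` {a<..a+c})
    = insert c {k \<in> {1..<c}. f (a + k) \<in> R \<or> f (Suc (a + k)) \<noteq> Suc (f (a + k))}"
proof -
  let ?X = "f ` {a<..a+c}"
  note next_iff = Suc_in_strict_mono_image_iff[OF mono]
  have "induced_breaks R ?X = (\<lambda>j. j - a) ` {j \<in> {a<..a+c}. f j \<in> R \<or> Suc (f j) \<notin> ?X}"
    unfolding induced_breaks_def using card_image_Int_atMost[OF mono] by force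
  also have "\<dots> = insert c {k \<in> {1..<c}. f (a + k) \<in> R \<or> f (Suc (a + k)) \<noteq> Suc (f (a + k))}"
  proof (intro set_eqI iffI)
    fix k
    assume "k \<in> (\<lambda>j. j - a) ` {j \<in> {a<..a+c}. f j \<in> R \<or> Suc (f j) \<notin> ?X}"
    then obtain j where "j \<in> {a<..a+c}" "f j \<in> R \<or> Suc (f j) \<notin> ?X" "k = j - a"
      by blast
    then show "k \<in> insert c {k \<in> {1..<c}. f (a + k) \<in> R \<or> f (Suc (a + k)) \<noteq> Suc (f (a + k))}"
      using next_iff[of j] by (cases "j = a + c") auto
  next
    fix k
    assume "k \<in> insert c {k \<in> {1..<c}. f (a + k) \<in> R \<or> f (Suc (a + k)) \<noteq> Suc (f (a + k))}"
    then have "a + k \<in> {a<..a+c} \<and> (f (a + k) \<in> R \<or> Suc (f (a + k)) \<notin> ?X)"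
      using next_iff[of "a + k"] \<open>1 \<le> c\<close> by auto
    then show "k \<in> (\<lambda>j. j - a) ` {j \<in> {a<..a+c}. f j \<in> R \<or> Suc (f j) \<notin> ?X}"
      by (intro rev_image_eqI[of "a + k"]) auto
  qed
  finally show ?thesis .
qed

section \<open>Splittings of an exponent vector\<close>

lemma psum_block_exists:
  assumes "1 \<le> m" and "m \<le> psum e N"
  obtains i where "i < N" and "psum e i < m" and "m \<le> psum e (Suc i)"
proof -
  have "\<exists>i<N. psum e i < m \<and> m \<le> psum e (Suc i)"
    using assms(2)
  proof (induction N)
    case (Suc N)
    show ?case
    proof (cases "m \<le> psum e N")
      case True
      then show ?thesis
        using Suc.IH less_SucI by blast
    next
      case False
      then show ?thesis
        using Suc.prems by auto
    qed
  qed (use assms(1) in simp)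
  then show ?thesis
    using that by blast
qed

lemma psum_block_unique:
  assumes "psum e i < m" "m \<le> psum e (Suc i)" "psum e j < m" "m \<le> psum e (Suc j)"
  shows "i = j"
proof (rule ccontr)
  assume "i \<noteq> j"
  then consider "Suc i \<le> j" | "Suc j \<le> i"
    by linarith
  then show False
  proof cases
    case 1
    then have "psum e (Suc i) \<le> psum e j"
      by (rule psum_mono)
    then show False
      using assms by linarith
  next
    case 2
    then have "psum e (Suc j) \<le> psum e i"
      by (rule psum_mono)
    then show False
      using assms by linarith
  qed
qed

(* Cutting 1, 2, ... into consecutive blocks {psum e i<..psum e (Suc i)} of lengths e i, this
   collects the (lo i + 1)-th up to the (hi i)-th element of every block i. *)
definition block_seg :: "(nat \<Rightarrow> nat) \<Rightarrow> (nat \<Rightarrow> nat) \<Rightarrow> (nat \<Rightarrow> nat) \<Rightarrow> nat set" where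
  "block_seg e lo hi = {m. \<exists>i. psum e i + lo i < m \<and> m \<le> psum e i + hi i}"

lemma block_seg_iff:
  assumes "\<forall>j. hi j \<le> e j" and "psum e i < m" and "m \<le> psum e (Suc i)"
  shows "m \<in> block_seg e lo hi \<longleftrightarrow> psum e i + lo i < m \<and> m \<le> psum e i + hi i"
proof
  assume "m \<in> block_seg e lo hi"
  then obtain j where j: "psum e j + lo j < m" "m \<le> psum e j + hi j"
    unfolding block_seg_def by auto
  then have "psum e j < m" "m \<le> psum e (Suc j)"
    using assms(1)[rule_format, of j] by auto
  then have "j = i"
    using assms(2,3) psum_block_unique by blast
  then show "psum e i + lo i < m \<and> m \<le> psum e i + hi i"
    using j by simp
qed (auto simp: block_seg_def)

lemma block_seg_subset:
  assumes "\<forall>j. hi j \<le> e j" and "\<forall>i\<ge>N. e i = 0"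
  shows "block_seg e lo hi \<subseteq> {1..psum e N}"
proof
  fix m
  assume "m \<in> block_seg e lo hi"
  then obtain i where i: "psum e i + lo i < m" "m \<le> psum e i + hi i"
    unfolding block_seg_def by auto
  have "hi i \<le> e i"
    using assms(1) by simp
  then have "e i \<noteq> 0"
    using i by linarith
  then have "Suc i \<le> N"
    using assms(2) by (metis not_less_eq_eq)
  then have "psum e (Suc i) \<le> psum e N"
    by (rule psum_mono)
  then show "m \<in> {1..psum e N}"
    using i \<open>hi i \<le> e i\<close> by auto
qed

lemma block_seg_upto_Suc:
  assumes "\<forall>j. hi j \<le> e j"
  shows "block_seg e lo hi \<inter> {..psum e (Suc i)}
    = (block_seg e lo hi \<inter> {..psum e i}) \<union> {psum e i + lo i<..psum e i + hi i}"
proof (intro set_eqI iffI)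
  fix m
  assume m: "m \<in> block_seg e lo hi \<inter> {..psum e (Suc i)}"
  then obtain j where j: "psum e j + lo j < m" "m \<le> psum e j + hi j"
    unfolding block_seg_def by auto
  have "hi j \<le> e j"
    using assms by simp
  consider "j < i" | "j = i" | "Suc i \<le> j"
    by linarith
  then show "m \<in> (block_seg e lo hi \<inter> {..psum e i}) \<union> {psum e i + lo i<..psum e i + hi i}"
  proof cases
    case 1
    then have "psum e (Suc j) \<le> psum e i"
      by (intro psum_mono) simp
    then show ?thesis
      using m j \<open>hi j \<le> e j\<close> by auto
  next
    case 2
    then show ?thesis
      using j by auto
  next
    case 3
    then have "psum e (Suc i) \<le> psum e j"
      by (rule psum_mono)
    then show ?thesis
      using m j by auto
  qed
next
  fix m
  assume "m \<in> (block_seg e lo hi \<inter> {..psum e i}) \<union> {psum e i + lo i<..psum e i + hi i}"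
  then show "m \<in> block_seg e lo hi \<inter> {..psum e (Suc i)}"
    using assms[rule_format, of i] unfolding block_seg_def by auto
qed

lemma card_block_seg_upto:
  assumes "\<forall>j. hi j \<le> e j" and "\<forall>j. lo j \<le> hi j"
  shows "card (block_seg e lo hi \<inter> {..psum e i}) = psum (\<lambda>j. hi j - lo j) i"
proof (induction i)
  case 0
  have "block_seg e lo hi \<inter> {..0} = {}"
    unfolding block_seg_def by auto
  then show ?case
    by simp
next
  case (Suc i)
  have "finite (block_seg e lo hi \<inter> {..psum e i})"
    by simp
  moreover have "(block_seg e lo hi \<inter> {..psum e i}) \<inter> {psum e i + lo i<..psum e i + hi i} = {}"
    by auto
  ultimately show ?case
    unfolding block_seg_upto_Suc[OF assms(1)]
    using Suc assms(2)[rule_format, of i] by (simp add: card_Un_disjoint)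
qed

lemma card_block_seg_upto_inside:
  assumes "\<forall>j. hi j \<le> e j" and "\<forall>j. lo j \<le> hi j"
    and "psum e i + lo i < m" and "m \<le> psum e i + hi i"
  shows "card (block_seg e lo hi \<inter> {..m}) = psum (\<lambda>j. hi j - lo j) i + (m - psum e i - lo i)"
proof -
  have "m \<le> psum e (Suc i)"
    using assms(1)[rule_format, of i] assms(4) by simp
  then have "block_seg e lo hi \<inter> {..m} = block_seg e lo hi \<inter> {..psum e (Suc i)} \<inter> {..m}"
    by auto
  also have "\<dots> = (block_seg e lo hi \<inter> {..psum e i}) \<union> {psum e i + lo i<..m}"
    unfolding block_seg_upto_Suc[OF assms(1)] using assms(3,4) by auto
  finally have split: "block_seg e lo hi \<inter> {..m} = (block_seg e lo hi \<inter> {..psum e i}) \<union> {psum e i + lo i<..m}" .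
  have "(block_seg e lo hi \<inter> {..psum e i}) \<inter> {psum e i + lo i<..m} = {}"
    by auto
  then show ?thesis
    unfolding split using card_block_seg_upto[OF assms(1,2)] assms(3)
    by (simp add: card_Un_disjoint)
qed

lemma block_seg_run_end_iff:
  assumes hi: "\<forall>j. hi j \<le> e j" and m: "psum e i + lo i < m" "m \<le> psum e i + hi i"
  shows "m \<in> breaks e \<or> Suc m \<notin> block_seg e lo hi \<longleftrightarrow> m = psum e i + hi i"
proof
  assume "m \<in> breaks e \<or> Suc m \<notin> block_seg e lo hi"
  show "m = psum e i + hi i"
  proof (rule ccontr)
    assume "m \<noteq> psum e i + hi i"
    then have "Suc m \<in> block_seg e lo hi"
      using m unfolding block_seg_def by (intro CollectI exI[of _ i]) linarith
    with \<open>m \<in> breaks e \<or> Suc m \<notin> block_seg e lo hi\<close> obtain j where j: "m = psum e (Suc j)" "e j \<noteq> 0"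
      unfolding breaks_def by auto
    have "i = j"
      using m j hi[rule_format, of i] by (intro psum_block_unique[of e i m j]) auto
    then show False
      using j m \<open>m \<noteq> psum e i + hi i\<close> hi[rule_format, of i] by simp
  qed
next
  assume m_end: "m = psum e i + hi i"
  show "m \<in> breaks e \<or> Suc m \<notin> block_seg e lo hi"
  proof (cases "hi i = e i")
    case True
    then show ?thesis
      using m m_end unfolding breaks_def by auto
  next
    case False
    then have "psum e i < Suc m" "Suc m \<le> psum e (Suc i)"
      using hi[rule_format, of i] m_end by auto
    then show ?thesis
      using block_seg_iff[OF hi, of i "Suc m" lo] m_end by auto
  qed
qed

lemma induced_breaks_block_seg:
  assumes hi: "\<forall>j. hi j \<le> e j" and lo: "\<forall>j. lo j \<le> hi j"
  shows "induced_breaks (breaks e) (block_seg e lo hi) = breaks (\<lambda>j. hi j - lo j)"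
proof (intro set_eqI iffI)
  fix x
  assume "x \<in> induced_breaks (breaks e) (block_seg e lo hi)"
  then obtain m where x: "x = card (block_seg e lo hi \<inter> {..m})" and "m \<in> block_seg e lo hi"
    and run_end: "m \<in> breaks e \<or> Suc m \<notin> block_seg e lo hi"
    unfolding induced_breaks_def by auto
  then obtain i where i: "psum e i + lo i < m" "m \<le> psum e i + hi i"
    unfolding block_seg_def by auto
  then have "m = psum e i + hi i"
    using block_seg_run_end_iff[of hi e i lo m, OF hi i] run_end by simp
  then show "x \<in> breaks (\<lambda>j. hi j - lo j)"
    using x card_block_seg_upto_inside[OF hi lo i] i unfolding breaks_def
    by (intro CollectI exI[of _ i]) auto
next
  fix x
  assume "x \<in> breaks (\<lambda>j. hi j - lo j)"
  then obtain i where x: "x = psum (\<lambda>j. hi j - lo j) (Suc i)" and "lo i < hi i"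
    unfolding breaks_def by auto
  then have i: "psum e i + lo i < psum e i + hi i" "psum e i + hi i \<le> psum e i + hi i"
    by simp_all
  then have "psum e i + hi i \<in> block_seg e lo hi"
    unfolding block_seg_def by blast
  moreover have "card (block_seg e lo hi \<inter> {..psum e i + hi i}) = x"
    using card_block_seg_upto_inside[OF hi lo i] \<open>lo i < hi i\<close> x by simp
  moreover have "psum e i + hi i \<in> breaks e \<or> Suc (psum e i + hi i) \<notin> block_seg e lo hi"
    using block_seg_run_end_iff[of hi e i lo "psum e i + hi i", OF hi i] by simp
  ultimately show "x \<in> induced_breaks (breaks e) (block_seg e lo hi)"
    unfolding induced_breaks_def by blast
qed

lemma block_seg_complement:
  assumes a: "\<forall>j. a j \<le> e j" and N: "\<forall>i\<ge>N. e i = 0"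
  shows "{1..psum e N} - block_seg e (\<lambda>_. 0) a = block_seg e a e"
proof (intro set_eqI iffI)
  fix m
  assume m: "m \<in> {1..psum e N} - block_seg e (\<lambda>_. 0) a"
  then obtain i where i: "psum e i < m" "m \<le> psum e (Suc i)"
    using psum_block_exists[of m e N] by auto
  then show "m \<in> block_seg e a e"
    using m block_seg_iff[OF a i, of "\<lambda>_. 0"] block_seg_iff[of e e i m a] i by auto
next
  fix m
  assume m: "m \<in> block_seg e a e"
  then have "m \<in> {1..psum e N}"
    using block_seg_subset[of e e N a] N by auto
  then obtain i where i: "psum e i < m" "m \<le> psum e (Suc i)"
    using psum_block_exists[of m e N] by auto
  then show "m \<in> {1..psum e N} - block_seg e (\<lambda>_. 0) a"
    using \<open>m \<in> {1..psum e N}\<close> m block_seg_iff[OF a i, of "\<lambda>_. 0"] block_seg_iff[of e e i m a]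
    by auto
qed

lemma block_seg_ascent:
  assumes "\<forall>j. a j \<le> e j" and "1 \<le> m"
    and "m \<notin> block_seg e (\<lambda>_. 0) a" and "Suc m \<in> block_seg e (\<lambda>_. 0) a"
  shows "m \<in> breaks e"
proof -
  obtain i where i: "psum e i < Suc m" "Suc m \<le> psum e i + a i"
    using assms(4) unfolding block_seg_def by auto
  have "\<not> psum e i < m"
  proof
    assume "psum e i < m"
    then have "m \<in> block_seg e (\<lambda>_. 0) a"
      using i unfolding block_seg_def by (intro CollectI exI[of _ i]) auto
    then show False
      using assms(3) by simp
  qed
  then have "m = psum e i"
    using i by simp
  then show ?thesis
    using psum_in_breaks[of e i] assms(2) by simp
qed

lemma inj_on_block_seg: "inj_on (block_seg e (\<lambda>_. 0)) {a. \<forall>j. a j \<le> e j}"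
proof (rule inj_onI)
  fix a b
  assume "a \<in> {a. \<forall>j. a j \<le> e j}" "b \<in> {a. \<forall>j. a j \<le> e j}"
    and eq: "block_seg e (\<lambda>_. 0) a = block_seg e (\<lambda>_. 0) b"
  then have "psum a k = psum b k" for k
    using card_block_seg_upto[of a e "\<lambda>_. 0" k] card_block_seg_upto[of b e "\<lambda>_. 0" k] by simp
  then show "a = b"
    by (metis add_left_cancel psum_Suc ext)
qed

lemma down_closed_eq_interval:
  fixes X :: "nat set"
  assumes "X \<subseteq> {l<..h}" and "\<And>x y. x \<in> X \<Longrightarrow> l < y \<Longrightarrow> y \<le> x \<Longrightarrow> y \<in> X"
  shows "X = {l<..l + card X}"
proof (cases "X = {}")
  case False
  have "finite X"
    using assms(1) finite_subset by blast
  define t where "t = Max X"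
  have t: "t \<in> X" "\<And>x. x \<in> X \<Longrightarrow> x \<le> t"
    using \<open>finite X\<close> False unfolding t_def by auto
  have "X = {l<..t}"
  proof (intro set_eqI iffI)
    fix x
    assume "x \<in> X"
    then show "x \<in> {l<..t}"
      using assms(1) t(2) by auto
  next
    fix x
    assume "x \<in> {l<..t}"
    then show "x \<in> X"
      using assms(2)[OF t(1)] by simp
  qed
  moreover have "l < t"
    using t(1) assms(1) by auto
  ultimately show ?thesis
    by simp
qed simp

lemma block_Int_eq_interval:
  assumes S: "S \<subseteq> {1..psum e N}"
    and ascent: "\<And>m. 1 \<le> m \<Longrightarrow> m < psum e N \<Longrightarrow> m \<notin> S \<Longrightarrow> Suc m \<in> S \<Longrightarrow> m \<in> breaks e"
  shows "S \<inter> {psum e i<..psum e (Suc i)} = {psum e i<..psum e i + card (S \<inter> {psum e i<..psum e (Suc i)})}"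
proof (rule down_closed_eq_interval)
  \<comment> \<open>an ascent m \<notin> S, m + 1 \<in> S inside a block would be a break of e, i.e. a block end\<close>
  have "m \<in> S" if "psum e i < m" "m + d \<in> S" "m + d \<le> psum e (Suc i)" for m d
    using that
  proof (induction d)
    case (Suc d)
    have "m + d \<in> S"
    proof (rule ccontr)
      assume "m + d \<notin> S"
      moreover have "m + d < psum e N"
        using Suc.prems(2) S by auto
      ultimately have "m + d \<in> breaks e"
        using ascent[of "m + d"] Suc.prems by simp
      then obtain j where j: "m + d = psum e (Suc j)" "e j \<noteq> 0"
        unfolding breaks_def by auto
      have "j = i"
        using j Suc.prems by (intro psum_block_unique[of e j "m + d" i]) auto
      then show False
        using j Suc.prems by simp
    qed
    then show ?case
      using Suc by simp
  qed simp
  then show "y \<in> S \<inter> {psum e i<..psum e (Suc i)}"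
    if "x \<in> S \<inter> {psum e i<..psum e (Suc i)}" "psum e i < y" "y \<le> x" for x y
    using that by (metis IntD1 IntD2 IntI greaterThanAtMost_iff le_add_diff_inverse order_trans)
qed auto

lemma block_seg_surj:
  assumes N: "\<forall>i\<ge>N. e i = 0" and S: "S \<subseteq> {1..psum e N}"
    and ascent: "\<And>m. 1 \<le> m \<Longrightarrow> m < psum e N \<Longrightarrow> m \<notin> S \<Longrightarrow> Suc m \<in> S \<Longrightarrow> m \<in> breaks e"
  obtains a where "\<forall>j. a j \<le> e j" and "block_seg e (\<lambda>_. 0) a = S"
proof -
  define a where "a i = card (S \<inter> {psum e i<..psum e (Suc i)})" for i
  have "a j \<le> card {psum e j<..psum e (Suc j)}" for j
    unfolding a_def by (intro card_mono) auto
  then have a_le: "\<forall>j. a j \<le> e j"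
    by simp
  have block: "S \<inter> {psum e i<..psum e (Suc i)} = {psum e i<..psum e i + a i}" for i
    unfolding a_def by (rule block_Int_eq_interval[OF S ascent])
  have "block_seg e (\<lambda>_. 0) a = S"
  proof (intro set_eqI iffI)
    fix m
    assume "m \<in> block_seg e (\<lambda>_. 0) a"
    then obtain i where "psum e i < m" "m \<le> psum e i + a i"
      unfolding block_seg_def by auto
    then show "m \<in> S"
      using block[of i] by (metis IntE greaterThanAtMost_iff)
  next
    fix m
    assume "m \<in> S"
    then have "1 \<le> m" "m \<le> psum e N"
      using S by auto
    then obtain i where i: "psum e i < m" "m \<le> psum e (Suc i)"
      by (rule psum_block_exists)
    then have "m \<le> psum e i + a i"
      using block[of i] \<open>m \<in> S\<close> by auto
    then show "m \<in> block_seg e (\<lambda>_. 0) a"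
      using i unfolding block_seg_def by (intro CollectI exI[of _ i]) simp
  qed
  then show ?thesis
    using that a_le by blast
qed

(* The common encoding of both sides: S stands for block_seg e (\<lambda>_. 0) a, resp. for \<zeta> ` {1..p}. *)
definition split_sets :: "nat \<Rightarrow> nat set \<Rightarrow> nat set \<Rightarrow> nat set \<Rightarrow> nat set set" where
  "split_sets n R P Q = {S. S \<subseteq> {1..n} \<and> (\<forall>m\<in>{1..<n}. m \<notin> S \<and> Suc m \<in> S \<longrightarrow> m \<in> R)
     \<and> induced_breaks (insert n R) S = P \<and> induced_breaks (insert n R) ({1..n} - S) = Q}"

lemma split_sets_card:
  assumes "S \<in> split_sets n R (insert p J) Q" and "J \<subseteq> {1..<p}"
  shows "S \<subseteq> {1..n}" and "card S = p"
proof -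
  show "S \<subseteq> {1..n}"
    using assms(1) unfolding split_sets_def by simp
  then have "finite S"
    using finite_subset by blast
  moreover have "induced_breaks (insert n R) S = insert p J"
    using assms(1) unfolding split_sets_def by simp
  moreover have "J \<subseteq> {..<p}"
    using assms(2) by auto
  ultimately show "card S = p"
    by (rule card_eq_if_induced_breaks_eq)
qed

lemma block_seg_in_split_sets_iff:
  assumes N: "\<forall>i\<ge>N. e i = 0" and total: "psum e N = n" and breaks_e: "breaks e = insert n R"
    and a: "\<forall>i. a i \<le> e i"
  shows "block_seg e (\<lambda>_. 0) a \<in> split_sets n R P Q \<longleftrightarrow> breaks a = P \<and> breaks (\<lambda>i. e i - a i) = Q"
proof -
  have "induced_breaks (insert n R) (block_seg e (\<lambda>_. 0) a) = breaks a"
    and "induced_breaks (insert n R) ({1..n} - block_seg e (\<lambda>_. 0) a) = breaks (\<lambda>i. e i - a i)"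
    using induced_breaks_block_seg[of a e "\<lambda>_. 0"] induced_breaks_block_seg[of e e a]
      block_seg_complement[OF a N] a breaks_e total by simp_all
  moreover have "m \<in> R"
    if "m \<in> {1..<n}" "m \<notin> block_seg e (\<lambda>_. 0) a" "Suc m \<in> block_seg e (\<lambda>_. 0) a" for m
    using block_seg_ascent[OF a _ that(2,3)] that(1) breaks_e by auto
  ultimately show ?thesis
    unfolding split_sets_def using block_seg_subset[OF a N] total by auto
qed

lemma card_splittings_eq_card_split_sets:
  assumes "finite {i. e i \<noteq> 0}" and breaks_e: "breaks e = insert n R" and "R \<subseteq> {1..<n}"
  shows "card {a. (\<forall>i. a i \<le> e i) \<and> breaks a = P \<and> breaks (\<lambda>i. e i - a i) = Q} = card (split_sets n R P Q)"
proof (rule bij_betw_same_card[of "block_seg e (\<lambda>_. 0)"])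
  let ?A = "{a. (\<forall>i. a i \<le> e i) \<and> breaks a = P \<and> breaks (\<lambda>i. e i - a i) = Q}"
  obtain N where N: "\<forall>i\<ge>N. e i = 0"
    using support_bound[OF assms(1)] by blast
  then have total: "psum e N = n"
    using psum_eq_max_break assms(2,3) by blast
  note seg_iff = block_seg_in_split_sets_iff[OF N total breaks_e]
  show "bij_betw (block_seg e (\<lambda>_. 0)) ?A (split_sets n R P Q)"
  proof (rule bij_betw_imageI)
    show "inj_on (block_seg e (\<lambda>_. 0)) ?A"
      by (rule inj_on_subset[OF inj_on_block_seg]) auto
  next
    show "block_seg e (\<lambda>_. 0) ` ?A = split_sets n R P Q"
    proof (intro equalityI subsetI)
      fix S
      assume "S \<in> block_seg e (\<lambda>_. 0) ` ?A"
      then show "S \<in> split_sets n R P Q"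
        using seg_iff by auto
    next
      fix S
      assume S: "S \<in> split_sets n R P Q"
      have "S \<subseteq> {1..psum e N}"
        using S total unfolding split_sets_def by simp
      moreover have "m \<in> breaks e" if "1 \<le> m" "m < psum e N" "m \<notin> S" "Suc m \<in> S" for m
        using S that total breaks_e unfolding split_sets_def by auto
      ultimately obtain a where a: "\<forall>j. a j \<le> e j" "block_seg e (\<lambda>_. 0) a = S"
        using block_seg_surj[OF N] by blast
      then show "S \<in> block_seg e (\<lambda>_. 0) ` ?A"
        using S seg_iff[OF a(1)] by (intro rev_image_eqI[of a]) auto
    qed
  qed
qed

section \<open>Shuffles\<close>

lemma zetaJ_eq:
  assumes "J \<subseteq> {1..<p}" and "i \<in> {1..p}"
  shows "zetaJ p J i = p - Min (insert p {j \<in> J. i \<le> j}) + (i - Max (insert 0 {j \<in> J. j < i}))"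
    and "Max (insert 0 {j \<in> J. j < i}) < i"
    and "i \<le> Min (insert p {j \<in> J. i \<le> j})" and "Min (insert p {j \<in> J. i \<le> j}) \<le> p"
proof -
  have "finite J"
    using assms(1) finite_subset by blast
  then have fin: "finite {j \<in> J. j < i}" "finite {j \<in> J. i \<le> j}"
    by simp_all
  show "Max (insert 0 {j \<in> J. j < i}) < i"
    using assms by (subst Max_less_iff) (use fin in auto)
  show "i \<le> Min (insert p {j \<in> J. i \<le> j})" "Min (insert p {j \<in> J. i \<le> j}) \<le> p"
    using assms fin by (auto simp: Min_ge_iff)
  show "zetaJ p J i = p - Min (insert p {j \<in> J. i \<le> j}) + (i - Max (insert 0 {j \<in> J. j < i}))"
    using assms(2) unfolding zetaJ_def by (simp add: Let_def)
qed

lemma zetaJ_bounds: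
  assumes "J \<subseteq> {1..<p}" and "i \<in> {1..p}"
  shows "zetaJ p J i \<in> {1..p}"
  unfolding atLeastAtMost_iff zetaJ_eq(1)[OF assms] using zetaJ_eq(2-4)[OF assms] by linarith

lemma zetaJ_descent_iff:
  assumes J: "J \<subseteq> {1..<p}" and "1 \<le> i" and "i < p"
  shows "zetaJ p J (Suc i) < zetaJ p J i \<longleftrightarrow> i \<in> J"
proof -
  have "finite J"
    using J finite_subset by blast
  define a where "a = Max (insert 0 {j \<in> J. j < i})"
  define b where "b = Min (insert p {j \<in> J. i \<le> j})"
  define a' where "a' = Max (insert 0 {j \<in> J. j < Suc i})"
  define b' where "b' = Min (insert p {j \<in> J. Suc i \<le> j})"
  have z: "zetaJ p J i = p - b + (i - a)" "a < i" "i \<le> b" "b \<le> p"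
    using zetaJ_eq[OF J, of i] assms(2,3) unfolding a_def b_def by auto
  have z': "zetaJ p J (Suc i) = p - b' + (Suc i - a')" "a' < Suc i" "Suc i \<le> b'" "b' \<le> p"
    using zetaJ_eq[OF J, of "Suc i"] assms(2,3) unfolding a'_def b'_def by auto
  show ?thesis
  proof (cases "i \<in> J")
    case True
    have "a' = i"
      unfolding a'_def using True \<open>finite J\<close> by (intro Max_eqI) auto
    moreover have "b = i"
      unfolding b_def using True \<open>finite J\<close> J by (intro Min_eqI) auto
    ultimately show ?thesis
      using True z z' by auto
  next
    case False
    then have "{j \<in> J. j < Suc i} = {j \<in> J. j < i}"
      by (auto simp: less_Suc_eq)
    moreover have "{j \<in> J. Suc i \<le> j} = {j \<in> J. i \<le> j}"
      using False by (auto simp: Suc_le_eq order.order_iff_strict)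
    ultimately have "a' = a" "b' = b"
      unfolding a_def a'_def b_def b'_def by simp_all
    then show ?thesis
      using False z z' by auto
  qed
qed

lemma cross_zetaJ_le_iff:
  assumes "J' \<subseteq> {1..<p}" and "K' \<subseteq> {1..<q}" and "x \<in> {1..p+q}"
  shows "cross p (zetaJ p J') (zetaJ q K') x \<le> p \<longleftrightarrow> x \<le> p"
proof (cases "x \<le> p")
  case True
  then show ?thesis
    using zetaJ_bounds[OF assms(1), of x] assms(3) unfolding cross_def by simp
next
  case False
  then have "x - p \<in> {1..q}"
    using assms(3) by auto
  then show ?thesis
    using zetaJ_bounds[OF assms(2), of "x - p"] False unfolding cross_def by auto
qed

lemma cross_zetaJ_descent_iff:
  assumes J': "J' \<subseteq> {1..<p}" and K': "K' \<subseteq> {1..<q}" and "x \<in> {1..<p+q}"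
  shows "cross p (zetaJ p J') (zetaJ q K') (Suc x) < cross p (zetaJ p J') (zetaJ q K') x
    \<longleftrightarrow> x \<in> J' \<union> (+) p ` K'"
proof -
  consider "x < p" | "x = p" | "p < x"
    by linarith
  then show ?thesis
  proof cases
    case 1
    then show ?thesis
      using zetaJ_descent_iff[OF J', of x] assms(3) K' unfolding cross_def by auto
  next
    case 2
    then show ?thesis
      using cross_zetaJ_le_iff[OF J' K', of x] cross_zetaJ_le_iff[OF J' K', of "Suc x"] assms(3) J' K'
      by auto
  next
    case 3
    have "x \<in> J' \<union> (+) p ` K' \<longleftrightarrow> x - p \<in> K'"
      using 3 J' by (auto intro: rev_image_eqI[of "x - p"])
    moreover have "Suc x - p = Suc (x - p)"
      using 3 by simp
    ultimately show ?thesis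
      using zetaJ_descent_iff[OF K', of "x - p"] assms(3) 3 unfolding cross_def by auto
  qed
qed

lemma shufflesD:
  assumes "\<zeta> \<in> shuffles p q"
  shows "\<zeta> permutes {1..p+q}" and "strict_mono_on {0<..p} \<zeta>" and "strict_mono_on {p<..p+q} \<zeta>"
  using assms unfolding shuffles_def strict_mono_on_def by auto

lemma shuffle_image_complement:
  assumes "\<zeta> \<in> shuffles p q"
  shows "{1..p+q} - \<zeta> ` {0<..p} = \<zeta> ` {p<..p+q}"
proof -
  have perm: "\<zeta> permutes {1..p+q}"
    using shufflesD(1)[OF assms] .
  have "{0<..p} \<union> {p<..p+q} = {1..p+q}"
    by auto
  then have "{1..p+q} = \<zeta> ` ({0<..p} \<union> {p<..p+q})"
    using permutes_image[OF perm] by simp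
  moreover have "\<zeta> ` {0<..p} \<inter> \<zeta> ` {p<..p+q} = {}"
    using permutes_inj[OF perm] by (auto simp: inj_eq)
  ultimately show ?thesis
    by auto
qed

lemma shuffle_eq_if_image_eq:
  assumes \<zeta>: "\<zeta> \<in> shuffles p q" and \<zeta>': "\<zeta>' \<in> shuffles p q"
    and eq: "\<zeta> ` {0<..p} = \<zeta>' ` {0<..p}"
  shows "\<zeta> = \<zeta>'"
proof
  fix j
  have eq': "\<zeta> ` {p<..p+q} = \<zeta>' ` {p<..p+q}"
    using shuffle_image_complement[OF \<zeta>] shuffle_image_complement[OF \<zeta>'] eq by simp
  consider "j \<in> {0<..p}" | "j \<in> {p<..p+q}" | "j \<notin> {1..p+q}"
    by fastforce
  then show "\<zeta> j = \<zeta>' j"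
  proof cases
    case 1
    then show ?thesis
      using strict_mono_on_eq_if_image_eq shufflesD(2)[OF \<zeta>] shufflesD(2)[OF \<zeta>'] eq by blast
  next
    case 2
    then show ?thesis
      using strict_mono_on_eq_if_image_eq shufflesD(3)[OF \<zeta>] shufflesD(3)[OF \<zeta>'] eq' by blast
  next
    case 3
    then show ?thesis
      using permutes_not_in shufflesD(1)[OF \<zeta>] shufflesD(1)[OF \<zeta>'] by metis
  qed
qed

lemma one_line_permutes:
  assumes "distinct L" and "set L = {1..n}"
  shows "(\<lambda>i. if i \<in> {1..n} then L ! (i - 1) else i) permutes {1..n}"
proof (rule bij_imp_permutes)
  have "length L = n"
    using assms distinct_card by fastforce
  then have "bij_betw ((!) L) {..<n} {1..n}"
    using bij_betw_nth assms by fastforce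
  moreover have "bij_betw (\<lambda>i. i - 1) {1..n} {..<n}"
    by (rule bij_betw_byWitness[of _ Suc]) auto
  ultimately have "bij_betw ((!) L \<circ> (\<lambda>i. i - 1)) {1..n} {1..n}"
    by (rule bij_betw_trans[rotated])
  then show "bij_betw (\<lambda>i. if i \<in> {1..n} then L ! (i - 1) else i) {1..n} {1..n}"
    by (rule bij_betw_cong[THEN iffD1, rotated]) simp
qed auto

lemma one_line_image:
  assumes "k \<le> length L"
  shows "(\<lambda>i. L ! (i - 1)) ` {0<..k} = set (take k L)"
proof -
  have "{0<..k} = Suc ` {0..<k}"
    by (simp add: atLeastSucAtMost_greaterThanAtMost atLeastLessThanSuc_atLeastAtMost)
  then have "(\<lambda>i. L ! (i - 1)) ` {0<..k} = (!) L ` {0..<k}"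
    by (simp only: image_image) simp
  then show ?thesis
    using nth_image[OF assms] by simp
qed

lemma shuffle_exists:
  assumes S: "S \<subseteq> {1..p+q}" and "card S = p"
  obtains \<zeta> where "\<zeta> \<in> shuffles p q" and "\<zeta> ` {0<..p} = S"
proof -
  define xs where "xs = sorted_list_of_set S"
  define ys where "ys = sorted_list_of_set ({1..p+q} - S)"
  define \<zeta> where "\<zeta> i = (if i \<in> {1..p+q} then (xs @ ys) ! (i - 1) else i)" for i
  have "finite S"
    using S finite_subset by blast
  have xs: "length xs = p" "set xs = S" "sorted_wrt (<) xs"
    unfolding xs_def using \<open>finite S\<close> \<open>card S = p\<close> by simp_all
  have ys: "length ys = q" "set ys = {1..p+q} - S" "sorted_wrt (<) ys"
    unfolding ys_def using S \<open>finite S\<close> \<open>card S = p\<close> by (simp_all add: card_Diff_subset)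
  have "distinct (xs @ ys)" "set (xs @ ys) = {1..p+q}"
    using xs ys S by (auto simp: strict_sorted_iff)
  then have perm: "\<zeta> permutes {1..p+q}"
    unfolding \<zeta>_def[abs_def] by (rule one_line_permutes)
  have first: "\<zeta> i = xs ! (i - 1)" if "1 \<le> i" "i \<le> p" for i
    using that xs(1) unfolding \<zeta>_def by (auto simp: nth_append)
  have second: "\<zeta> i = ys ! (i - 1 - p)" if "p < i" "i \<le> p + q" for i
    using that xs(1) unfolding \<zeta>_def by (auto simp: nth_append)
  have "\<zeta> i < \<zeta> j" if "1 \<le> i" "i < j" "j \<le> p" for i j
    using first[of i] first[of j] that sorted_wrt_nth_less[OF xs(3), of "i - 1" "j - 1"] xs(1) by simp
  moreover have "\<zeta> i < \<zeta> j" if "p < i" "i < j" "j \<le> p + q" for i j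
    using second[of i] second[of j] that sorted_wrt_nth_less[OF ys(3), of "i - 1 - p" "j - 1 - p"] ys(1)
    by simp
  ultimately have "\<zeta> \<in> shuffles p q"
    unfolding shuffles_def using perm by blast
  moreover have "\<zeta> ` {0<..p} = (\<lambda>i. xs ! (i - 1)) ` {0<..p}"
    using first by (intro image_cong) auto
  ultimately show ?thesis
    using that one_line_image[of p xs] xs(1,2) by simp
qed

locale shuffle_perm =
  fixes p q :: nat and \<zeta> :: "nat \<Rightarrow> nat"
  assumes shuffle: "\<zeta> \<in> shuffles p q" and p_pos: "1 \<le> p" and q_pos: "1 \<le> q"
begin

lemma perm: "\<zeta> permutes {1..p+q}"
  using shufflesD(1)[OF shuffle] .

lemma in_first_block_iff: "i \<in> {1..p+q} \<Longrightarrow> \<zeta> i \<in> \<zeta> ` {0<..p} \<longleftrightarrow> i \<le> p"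
  using permutes_inj[OF perm] by (auto simp: inj_eq)

lemma same_block_Suc:
  assumes "i \<in> {1..p+q}" and "i' \<in> {1..p+q}" and "i \<le> p \<longleftrightarrow> i' \<le> p" and "\<zeta> i' = Suc (\<zeta> i)"
  shows "i' = Suc i"
proof (cases "i \<le> p")
  case True
  then show ?thesis
    using strict_mono_on_Suc_value[OF shufflesD(2)[OF shuffle]] assms by auto
next
  case False
  then show ?thesis
    using strict_mono_on_Suc_value[OF shufflesD(3)[OF shuffle]] assms by auto
qed

lemma exists_Suc_value_iff:
  assumes "\<zeta> i = m" and "\<zeta> i' = Suc m"
  shows "(\<exists>j \<in> D. m = \<zeta> j \<and> \<zeta> (Suc j) = Suc m) \<longleftrightarrow> i \<in> D \<and> i' = Suc i"
proof -
  have "\<zeta> x = \<zeta> y \<longleftrightarrow> x = y" for x y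
    using permutes_inj[OF perm] by (simp add: inj_eq)
  then show ?thesis
    using assms by metis
qed

lemma r_map_mem_iff:
  assumes J': "J' \<subseteq> {1..<p}" and K': "K' \<subseteq> {1..<q}"
  shows "m \<in> r_map p q \<zeta> J' K' \<longleftrightarrow> m \<in> {1..<p+q} \<and>
    (m \<notin> \<zeta> ` {0<..p} \<and> Suc m \<in> \<zeta> ` {0<..p} \<or> (\<exists>j \<in> J' \<union> (+) p ` K'. m = \<zeta> j \<and> \<zeta> (Suc j) = Suc m))"
proof (cases "m \<in> {1..<p+q}")
  case False
  then show ?thesis
    unfolding r_map_def Des_def by auto
next
  case True
  let ?W = "cross p (zetaJ p J') (zetaJ q K')"
  define i where "i = inv \<zeta> m"
  define i' where "i' = inv \<zeta> (Suc m)"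
  have "m \<in> {1..p+q}" "Suc m \<in> {1..p+q}"
    using True by auto
  then have i: "i \<in> {1..p+q}" "i' \<in> {1..p+q}" "\<zeta> i = m" "\<zeta> i' = Suc m"
    unfolding i_def i'_def using permutes_inverses(1)[OF perm]
    by (simp_all only: permutes_in_image[OF permutes_inv[OF perm]])
  have "m \<in> r_map p q \<zeta> J' K' \<longleftrightarrow> ?W i' < ?W i"
    using True unfolding r_map_def Des_def i_def i'_def by simp
  moreover have "m \<in> \<zeta> ` {0<..p} \<longleftrightarrow> i \<le> p" "Suc m \<in> \<zeta> ` {0<..p} \<longleftrightarrow> i' \<le> p"
    using in_first_block_iff[OF i(1)] in_first_block_iff[OF i(2)] i(3,4) by simp_all
  moreover have "(\<exists>j \<in> J' \<union> (+) p ` K'. m = \<zeta> j \<and> \<zeta> (Suc j) = Suc m)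
      \<longleftrightarrow> i \<in> J' \<union> (+) p ` K' \<and> i' = Suc i"
    using i(3,4) by (rule exists_Suc_value_iff)
  moreover have "?W i \<le> p \<longleftrightarrow> i \<le> p" "?W i' \<le> p \<longleftrightarrow> i' \<le> p"
    using cross_zetaJ_le_iff[OF J' K'] i by auto
  moreover have "p \<notin> J' \<union> (+) p ` K'"
    using J' K' by auto
  moreover have "?W i' < ?W i \<longleftrightarrow> i \<in> J' \<union> (+) p ` K'" if "i' = Suc i"
    using cross_zetaJ_descent_iff[OF J' K', of i] that i by auto
  ultimately show ?thesis
    using True same_block_Suc[OF i(1,2) _ i(4)[folded i(3)]] by (cases "i \<le> p"; cases "i' \<le> p") auto
qed

definition J_max :: "nat set \<Rightarrow> nat set" where
  "J_max R = {j \<in> {1..<p}. \<zeta> (Suc j) = Suc (\<zeta> j) \<longrightarrow> \<zeta> j \<in> R}"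

definition K_max :: "nat set \<Rightarrow> nat set" where
  "K_max R = {k \<in> {1..<q}. \<zeta> (Suc (p + k)) = Suc (\<zeta> (p + k)) \<longrightarrow> \<zeta> (p + k) \<in> R}"

lemma r_map_subset_iff:
  assumes "J' \<subseteq> {1..<p}" and "K' \<subseteq> {1..<q}"
  shows "r_map p q \<zeta> J' K' \<subseteq> R \<longleftrightarrow>
    (\<forall>m\<in>{1..<p+q}. m \<notin> \<zeta> ` {0<..p} \<and> Suc m \<in> \<zeta> ` {0<..p} \<longrightarrow> m \<in> R) \<and> J' \<subseteq> J_max R \<and> K' \<subseteq> K_max R"
proof -
  have "\<zeta> j \<in> {1..<p+q}" if "j \<in> J' \<union> (+) p ` K'" "\<zeta> (Suc j) = Suc (\<zeta> j)" for j
    using that assms permutes_in_image[OF perm, of j] permutes_in_image[OF perm, of "Suc j"] by auto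
  then have "r_map p q \<zeta> J' K' \<subseteq> R \<longleftrightarrow>
      (\<forall>m\<in>{1..<p+q}. m \<notin> \<zeta> ` {0<..p} \<and> Suc m \<in> \<zeta> ` {0<..p} \<longrightarrow> m \<in> R)
      \<and> (\<forall>j \<in> J' \<union> (+) p ` K'. \<zeta> (Suc j) = Suc (\<zeta> j) \<longrightarrow> \<zeta> j \<in> R)"
    unfolding subset_iff r_map_mem_iff[OF assms] by blast
  also have "(\<forall>j \<in> J' \<union> (+) p ` K'. \<zeta> (Suc j) = Suc (\<zeta> j) \<longrightarrow> \<zeta> j \<in> R)
      \<longleftrightarrow> J' \<subseteq> J_max R \<and> K' \<subseteq> K_max R"
    unfolding J_max_def K_max_def using assms by auto
  finally show ?thesis .
qed

lemma greatest_is_iff: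
  assumes J: "J \<subseteq> {1..<p}" and K: "K \<subseteq> {1..<q}"
  shows "greatest_is p q \<zeta> R J K \<longleftrightarrow>
    (\<forall>m\<in>{1..<p+q}. m \<notin> \<zeta> ` {0<..p} \<and> Suc m \<in> \<zeta> ` {0<..p} \<longrightarrow> m \<in> R) \<and> J = J_max R \<and> K = K_max R"
    (is "_ \<longleftrightarrow> ?ascents \<and> _")
proof -
  let ?below = "{(J', K'). J' \<subseteq> {1..<p} \<and> K' \<subseteq> {1..<q} \<and> r_map p q \<zeta> J' K' \<subseteq> R}"
  have below_iff: "(J', K') \<in> ?below \<longleftrightarrow>
      J' \<subseteq> {1..<p} \<and> K' \<subseteq> {1..<q} \<and> ?ascents \<and> J' \<subseteq> J_max R \<and> K' \<subseteq> K_max R" for J' K'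
    using r_map_subset_iff[of J' K' R] by auto
  have max_below: "(J_max R, K_max R) \<in> ?below \<longleftrightarrow> ?ascents"
    unfolding below_iff unfolding J_max_def K_max_def by auto
  have "greatest_is p q \<zeta> R J K \<longleftrightarrow> (J, K) \<in> ?below \<and> (\<forall>(J', K') \<in> ?below. J' \<subseteq> J \<and> K' \<subseteq> K)"
    unfolding greatest_is_def Let_def ..
  also have "\<dots> \<longleftrightarrow> ?ascents \<and> J = J_max R \<and> K = K_max R"
  proof
    assume greatest: "(J, K) \<in> ?below \<and> (\<forall>(J', K') \<in> ?below. J' \<subseteq> J \<and> K' \<subseteq> K)"
    then have "?ascents" "J \<subseteq> J_max R" "K \<subseteq> K_max R"
      using below_iff[of J K] by simp_all
    moreover have "J_max R \<subseteq> J \<and> K_max R \<subseteq> K"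
      using bspec[OF conjunct2[OF greatest] max_below[THEN iffD2, OF \<open>?ascents\<close>]] by simp
    ultimately show "?ascents \<and> J = J_max R \<and> K = K_max R"
      by auto
  next
    assume "?ascents \<and> J = J_max R \<and> K = K_max R"
    then show "(J, K) \<in> ?below \<and> (\<forall>(J', K') \<in> ?below. J' \<subseteq> J \<and> K' \<subseteq> K)"
      using below_iff J K by auto
  qed
  finally show ?thesis .
qed

lemma induced_breaks_first_block:
  "induced_breaks (insert (p+q) R) (\<zeta> ` {0<..p}) = insert p (J_max R)"
proof -
  have "\<zeta> k < p + q" if "k \<in> {1..<p}" for k
  proof -
    have "\<zeta> k < \<zeta> p"
      using strict_mono_on_less[OF shufflesD(2)[OF shuffle], of k p] that p_pos by auto
    moreover have "\<zeta> p \<in> {1..p+q}"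
      using permutes_in_image[OF perm, of p] p_pos by auto
    ultimately show ?thesis
      by simp
  qed
  then have "{k \<in> {1..<p}. \<zeta> k \<in> insert (p+q) R \<or> \<zeta> (Suc k) \<noteq> Suc (\<zeta> k)} = J_max R"
    unfolding J_max_def by fastforce
  then show ?thesis
    using induced_breaks_strict_mono_image[of 0 p \<zeta> "insert (p+q) R"] shufflesD(2)[OF shuffle] p_pos
    by simp
qed

lemma induced_breaks_second_block:
  "induced_breaks (insert (p+q) R) ({1..p+q} - \<zeta> ` {0<..p}) = insert q (K_max R)"
proof -
  have "\<zeta> (p + k) < p + q" if "k \<in> {1..<q}" for k
  proof -
    have "\<zeta> (p + k) < \<zeta> (p + q)"
      using strict_mono_on_less[OF shufflesD(3)[OF shuffle], of "p + k" "p + q"] that q_pos by auto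
    moreover have "\<zeta> (p + q) \<in> {1..p+q}"
      using permutes_in_image[OF perm, of "p + q"] p_pos by auto
    ultimately show ?thesis
      by simp
  qed
  then have "{k \<in> {1..<q}. \<zeta> (p + k) \<in> insert (p+q) R \<or> \<zeta> (Suc (p + k)) \<noteq> Suc (\<zeta> (p + k))}
      = K_max R"
    unfolding K_max_def by fastforce
  then show ?thesis
    unfolding shuffle_image_complement[OF shuffle]
    using induced_breaks_strict_mono_image[OF shufflesD(3)[OF shuffle] q_pos] by simp
qed

lemma greatest_is_iff_split_sets:
  assumes "J \<subseteq> {1..<p}" and "K \<subseteq> {1..<q}"
  shows "greatest_is p q \<zeta> R J K \<longleftrightarrow> \<zeta> ` {0<..p} \<in> split_sets (p+q) R (insert p J) (insert q K)"
proof -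
  have fresh: "p \<notin> J_max R" "p \<notin> J" "q \<notin> K_max R" "q \<notin> K"
    using assms unfolding J_max_def K_max_def by auto
  have "insert p (J_max R) = insert p J \<longleftrightarrow> J_max R = J"
    by (rule insert_ident[OF fresh(1,2)])
  moreover have "insert q (K_max R) = insert q K \<longleftrightarrow> K_max R = K"
    by (rule insert_ident[OF fresh(3,4)])
  moreover have "\<zeta> ` {0<..p} \<subseteq> {1..p+q}"
  proof (rule image_subsetI)
    fix x
    assume "x \<in> {0<..p}"
    then have "x \<in> {1..p+q}"
      by auto
    then show "\<zeta> x \<in> {1..p+q}"
      by (simp only: permutes_in_image[OF perm])
  qed
  ultimately show ?thesis
    unfolding greatest_is_iff[OF assms] split_sets_def mem_Collect_eq induced_breaks_first_block
      induced_breaks_second_block by auto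
qed

end

lemma card_greatest_is_eq_card_split_sets:
  assumes "1 \<le> p" and "1 \<le> q" and J: "J \<subseteq> {1..<p}" and K: "K \<subseteq> {1..<q}"
  shows "card {\<zeta> \<in> shuffles p q. greatest_is p q \<zeta> R J K}
    = card (split_sets (p+q) R (insert p J) (insert q K))"
proof (rule bij_betw_same_card[of "\<lambda>\<zeta>. \<zeta> ` {0<..p}"])
  have greatest_iff: "greatest_is p q \<zeta> R J K \<longleftrightarrow> \<zeta> ` {0<..p} \<in> split_sets (p+q) R (insert p J) (insert q K)"
    if "\<zeta> \<in> shuffles p q" for \<zeta>
  proof -
    interpret shuffle_perm p q \<zeta>
      using that assms(1,2) by unfold_locales
    show ?thesis
      by (rule greatest_is_iff_split_sets[OF J K])
  qed
  show "bij_betw (\<lambda>\<zeta>. \<zeta> ` {0<..p}) {\<zeta> \<in> shuffles p q. greatest_is p q \<zeta> R J K}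
      (split_sets (p+q) R (insert p J) (insert q K))"
  proof (rule bij_betw_imageI)
    show "inj_on (\<lambda>\<zeta>. \<zeta> ` {0<..p}) {\<zeta> \<in> shuffles p q. greatest_is p q \<zeta> R J K}"
      by (rule inj_onI) (auto intro: shuffle_eq_if_image_eq)
  next
    show "(\<lambda>\<zeta>. \<zeta> ` {0<..p}) ` {\<zeta> \<in> shuffles p q. greatest_is p q \<zeta> R J K}
        = split_sets (p+q) R (insert p J) (insert q K)"
    proof (intro equalityI subsetI)
      fix S
      assume "S \<in> (\<lambda>\<zeta>. \<zeta> ` {0<..p}) ` {\<zeta> \<in> shuffles p q. greatest_is p q \<zeta> R J K}"
      then show "S \<in> split_sets (p+q) R (insert p J) (insert q K)"
        using greatest_iff by auto
    next
      fix S
      assume S: "S \<in> split_sets (p+q) R (insert p J) (insert q K)"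
      then obtain \<zeta> where "\<zeta> \<in> shuffles p q" "\<zeta> ` {0<..p} = S"
        using split_sets_card[OF S J] shuffle_exists by blast
      then show "S \<in> (\<lambda>\<zeta>. \<zeta> ` {0<..p}) ` {\<zeta> \<in> shuffles p q. greatest_is p q \<zeta> R J K}"
        using greatest_iff S by (intro rev_image_eqI[of \<zeta>]) auto
    qed
  qed
qed

theorem mainTheorem14:
  fixes p q :: nat and J K :: "nat set" and e :: "nat \<Rightarrow> nat"
  assumes "1 \<le> p" and "1 \<le> q" and "J \<subseteq> {1..<p}" and "K \<subseteq> {1..<q}"
    and "finite {i. e i \<noteq> 0}"
  shows "series_mult (M J p) (M K q) e =
     (\<Sum>R \<in> Pow {1..<p+q}.
        int (card {\<zeta> \<in> shuffles p q. greatest_is p q \<zeta> R J K}) * M R (p + q) e)"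
proof -
  let ?splittings = "{a. (\<forall>i. a i \<le> e i) \<and> breaks a = insert p J \<and> breaks (\<lambda>i. e i - a i) = insert q K}"
  have "int (card ?splittings) = (\<Sum>R \<in> Pow {1..<p+q}.
      int (card {\<zeta> \<in> shuffles p q. greatest_is p q \<zeta> R J K}) * M R (p + q) e)"
  proof (cases "p + q \<in> breaks e \<and> breaks e \<subseteq> {1..p+q}")
    case True
    define R where "R = breaks e - {p+q}"
    have "breaks e = insert (p+q) R" "R \<subseteq> {1..<p+q}"
      using True unfolding R_def by auto
    then show ?thesis
      unfolding sum_M_eq[OF assms(5)] R_def[symmetric]
      using True card_splittings_eq_card_split_sets[OF assms(5)]
        card_greatest_is_eq_card_split_sets[OF assms(1-4)] by simp
  next
    case False
    then have no_splittings: "?splittings = {}"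
      using breaks_of_splitting[OF assms(5) _ _ assms(3) _ assms(4)] by blast
    show ?thesis
      unfolding sum_M_eq[OF assms(5)] if_not_P[OF False] no_splittings by simp
  qed
  then show ?thesis
    unfolding series_mult_M[OF assms(5,3,4)] .
qed

end
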